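(* Let $\mathcal{A}\subseteq M_n(\mathbb{C})$ be a logmodular subalgebra. Then for every positive semidefinite matrix $b\in M_n(\mathbb{C})$ there exist $a,c\in\mathcal{A}$ such that $b=a^*a=cc^*$.
   Context: A unital subalgebra $\mathcal{A}\subseteq M_n(\mathbb{C})$ (containing the identity $1_n$) is called logmodular (in $M_n(\mathbb{C})$) if the set $\{a^*a : a\in\mathcal{A}^{-1}\}$ is dense in the set of positive invertible matrices in $M_n(\mathbb{C})$, where $\mathcal{A}^{-1}$ denotes the set of elements of $\mathcal{A}$ invertible in $\mathcal{A}$. *)

theory Defs
  imports "HOL-Analysis.Analysis"
begin

text \<open>Complex n x n matrices are represented as complex^'n^'n (dimension n = CARD('n)).\<close>

definition adjoint_mat :: "complex^'n^'n \<Rightarrow> complex^'n^'n" where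
  "adjoint_mat A = (\<chi> i j. cnj (A $ j $ i))"

definition unital_subalgebra :: "(complex^'n^'n) set \<Rightarrow> bool" where
  "unital_subalgebra S \<longleftrightarrow>
     mat 1 \<in> S \<and> 0 \<in> S \<and>
     (\<forall>a\<in>S. \<forall>b\<in>S. a + b \<in> S) \<and>
     (\<forall>a\<in>S. \<forall>b\<in>S. a ** b \<in> S) \<and>
     (\<forall>c::complex. \<forall>a\<in>S. (\<chi> i j. c * a $ i $ j) \<in> S)"

definition invertibles_in :: "(complex^'n^'n) set \<Rightarrow> (complex^'n^'n) set" where
  "invertibles_in S = {a \<in> S. \<exists>b\<in>S. a ** b = mat 1 \<and> b ** a = mat 1}"

definition psd_mat :: "complex^'n^'n \<Rightarrow> bool" where
  "psd_mat A \<longleftrightarrow> adjoint_mat A = A \<and>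
     (\<forall>x::complex^'n. let q = (\<Sum>i\<in>UNIV. cnj (x $ i) * (A *v x) $ i) in Im q = 0 \<and> Re q \<ge> 0)"

definition pos_invertible_mats :: "(complex^'n^'n) set" where
  "pos_invertible_mats = {A. psd_mat A \<and> invertible A}"

definition logmodular :: "(complex^'n^'n) set \<Rightarrow> bool" where
  "logmodular S \<longleftrightarrow> unital_subalgebra S \<and>
     pos_invertible_mats \<subseteq> closure {adjoint_mat a ** a | a. a \<in> invertibles_in S}"

end

theory Submission
  imports Defs
begin

(* Write F a = a* a and G a = a a*.  Both maps are continuous and
   coercive: the trace of F a (resp. G a) is the squared Frobenius norm of a,
   so |a|^2 <= n |F a|.  A unital subalgebra S of M_n is a linear subspace,
   hence closed, and a continuous coercive map sends closed sets to closed sets;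
   thus F ` S and G ` S are closed.
   Logmodularity says that the positive invertible matrices lie in the closure
   of F ` (invertibles of S), hence in F ` S.  For G we pass through inverses:
   if p > 0 then p^-1 > 0, so p^-1 = a* a with a in S; a has a left inverse,
   so (S being finite-dimensional) an inverse c in S, and then p = c c*.
   Finally every positive semidefinite b is the limit of b + (1/k) I > 0, so b
   lies in the closures of F ` S and G ` S, which are these sets themselves. *)

lemma adjoint_adjoint [simp]: "adjoint_mat (adjoint_mat A) = A"
  by (simp add: adjoint_mat_def vec_eq_iff)

lemma adjoint_mult: "adjoint_mat (A ** B) = adjoint_mat B ** adjoint_mat A"
  by (simp add: adjoint_mat_def matrix_matrix_mult_def vec_eq_iff mult.commute)

lemma adjoint_id [simp]: "adjoint_mat (mat 1) = mat 1"
  by (simp add: adjoint_mat_def mat_def vec_eq_iff)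

lemma hermitian_entry: "adjoint_mat A = A \<Longrightarrow> cnj (A $ j $ i) = A $ i $ j"
  by (metis adjoint_mat_def vec_lambda_beta)

lemma continuous_adjoint_square:
  "continuous_on UNIV (\<lambda>a::complex^'n^'n. adjoint_mat a ** a)"
  unfolding adjoint_mat_def matrix_matrix_mult_def by (intro continuous_intros)

lemma continuous_adjoint_cosquare:
  "continuous_on UNIV (\<lambda>a::complex^'n^'n. a ** adjoint_mat a)"
  unfolding adjoint_mat_def matrix_matrix_mult_def by (intro continuous_intros)

text \<open>The norm on vectors is the Euclidean one; for matrices it is the Frobenius norm.\<close>
lemma norm_vec_square:
  "norm (x::'a::real_normed_vector^'n) ^ 2 = (\<Sum>i\<in>UNIV. norm (x $ i) ^ 2)"
  unfolding norm_vec_def L2_set_def by (simp add: sum_nonneg)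

lemma diag_adjoint_square:
  "(adjoint_mat a ** a) $ j $ j = complex_of_real (\<Sum>k\<in>UNIV. norm (a $ k $ j) ^ 2)"
  unfolding adjoint_mat_def matrix_matrix_mult_def of_real_sum complex_norm_square
  by (simp add: mult.commute)

lemma diag_adjoint_cosquare:
  "(a ** adjoint_mat a) $ j $ j = complex_of_real (norm (a $ j) ^ 2)"
  unfolding adjoint_mat_def matrix_matrix_mult_def norm_vec_square of_real_sum complex_norm_square
  by (simp add: mult.commute)

lemma norm_diag_le: "norm ((M::'a::real_normed_vector^'n^'n) $ j $ j) \<le> norm M"
  using Finite_Cartesian_Product.norm_nth_le[of "M $ j" j]
    Finite_Cartesian_Product.norm_nth_le[of M j] by linarith

text \<open>The trace of a* a is the squared norm of a, and each diagonal entry is bounded by the norm.\<close>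
lemma norm_le_adjoint_square:
  "norm (a::complex^'n^'n) ^ 2 \<le> real CARD('n) * norm (adjoint_mat a ** a)"
proof -
  have "norm a ^ 2 = (\<Sum>k\<in>UNIV. \<Sum>j\<in>UNIV. norm (a $ k $ j) ^ 2)"
    by (simp add: norm_vec_square)
  also have "\<dots> = (\<Sum>j\<in>UNIV. \<Sum>k\<in>UNIV. norm (a $ k $ j) ^ 2)"
    by (rule sum.swap)
  also have "\<dots> = (\<Sum>j\<in>UNIV. norm ((adjoint_mat a ** a) $ j $ j))"
    by (simp only: diag_adjoint_square norm_of_real) (simp add: sum_nonneg)
  also have "\<dots> \<le> (\<Sum>j\<in>(UNIV::'n set). norm (adjoint_mat a ** a))"
    by (intro sum_mono norm_diag_le)
  finally show ?thesis by simp
qed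

lemma norm_le_adjoint_cosquare:
  "norm (a::complex^'n^'n) ^ 2 \<le> real CARD('n) * norm (a ** adjoint_mat a)"
proof -
  have "norm a ^ 2 = (\<Sum>j\<in>UNIV. norm ((a ** adjoint_mat a) $ j $ j))"
    by (simp only: diag_adjoint_cosquare norm_of_real) (simp add: norm_vec_square sum_nonneg)
  also have "\<dots> \<le> (\<Sum>j\<in>(UNIV::'n set). norm (a ** adjoint_mat a))"
    by (intro sum_mono norm_diag_le)
  finally show ?thesis by simp
qed

text \<open>A continuous map with norm x^2 \<le> C * norm (f x) maps closed sets to closed sets:
  near a point y of the closure of the image, preimages stay in a compact ball.\<close>
lemma closed_image_coercive:
  fixes f :: "'a::{real_normed_vector, heine_borel} \<Rightarrow> 'b::real_normed_vector"
  assumes S: "closed S" and C: "C \<ge> 0" and f: "continuous_on UNIV f"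
    and coercive: "\<And>x. x \<in> S \<Longrightarrow> norm x ^ 2 \<le> C * norm (f x)"
  shows "closed (f ` S)"
proof -
  have "y \<in> f ` S" if y: "y \<in> closure (f ` S)" for y
  proof -
    define K where "K = S \<inter> cball 0 (sqrt (C * (norm y + 1)))"
    have "compact (f ` K)"
      using S f unfolding K_def
      by (meson closed_Int_compact compact_cball compact_continuous_image
          continuous_on_subset subset_UNIV)
    have near: "ball y 1 \<inter> f ` S \<subseteq> f ` K"
    proof
      fix z assume "z \<in> ball y 1 \<inter> f ` S"
      then obtain x where x: "x \<in> S" "z = f x" "dist y (f x) < 1" by auto
      have "norm (f x) \<le> norm y + 1"
        using x(3) norm_triangle_ineq2[of "f x" y] by (simp add: dist_norm norm_minus_commute)
      then have "norm x ^ 2 \<le> C * (norm y + 1)"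
        using coercive[OF x(1)] mult_left_mono[OF _ C] by fastforce
      then show "z \<in> f ` K" using x real_le_rsqrt unfolding K_def by auto
    qed
    have "y \<in> ball y 1 \<inter> closure (f ` S)" using y by simp
    also have "\<dots> \<subseteq> closure (ball y 1 \<inter> f ` S)" by (rule open_Int_closure_subset) simp
    also have "\<dots> \<subseteq> f ` K"
      using closure_mono[OF near] \<open>compact (f ` K)\<close> by (simp add: compact_imp_closed closure_closed)
    also have "\<dots> \<subseteq> f ` S" unfolding K_def by auto
    finally show ?thesis .
  qed
  then show ?thesis using closure_subset_eq by blast
qed

lemma scaleR_mat_entrywise:
  "scaleR (c::real) (a :: complex^'n^'n) = (\<chi> i j. complex_of_real c * a $ i $ j)"
  unfolding vec_eq_iff by (simp add: scaleR_conv_of_real[where 'a=complex])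

lemma unital_subalgebra_subspace: "unital_subalgebra S \<Longrightarrow> subspace S"
  unfolding unital_subalgebra_def subspace_def scaleR_mat_entrywise by blast

lemma closed_image_adjoint_square:
  fixes S :: "(complex^'n^'n) set"
  shows "unital_subalgebra S \<Longrightarrow> closed ((\<lambda>a. adjoint_mat a ** a) ` S)"
  by (intro closed_image_coercive[where C="real CARD('n)"] closed_subspace
      unital_subalgebra_subspace continuous_adjoint_square norm_le_adjoint_square) simp_all

lemma closed_image_adjoint_cosquare:
  fixes S :: "(complex^'n^'n) set"
  shows "unital_subalgebra S \<Longrightarrow> closed ((\<lambda>a. a ** adjoint_mat a) ` S)"
  by (intro closed_image_coercive[where C="real CARD('n)"] closed_subspace
      unital_subalgebra_subspace continuous_adjoint_cosquare norm_le_adjoint_cosquare) simp_all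

text \<open>Inverse-closedness: an element of S with a left inverse in M_n is invertible in S,
  since left multiplication by it is an injective linear self-map of the finite-dimensional S.\<close>
lemma unital_subalgebra_inverse:
  fixes S :: "(complex^'n^'n) set"
  assumes S: "unital_subalgebra S" and a: "a \<in> S" and left_inv: "a' ** a = mat 1"
  shows "\<exists>c\<in>S. a ** c = mat 1 \<and> c ** a = mat 1"
proof -
  define h where "h = (\<lambda>x::complex^'n^'n. a ** x)"
  have lin: "linear h"
    unfolding h_def
    by (rule linearI) (simp_all add: matrix_add_ldistrib vec_eq_iff matrix_matrix_mult_def
        scaleR_conv_of_real[where 'a=complex] sum_distrib_left mult.left_commute distrib_left sum.distrib)
  have inj: "inj_on h (span S)"
    unfolding h_def by (rule inj_onI) (metis left_inv matrix_mul_assoc matrix_mul_lid)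
  have into: "h ` S \<subseteq> S" using S a unfolding h_def unital_subalgebra_def by auto
  have sS: "subspace S" using S by (rule unital_subalgebra_subspace)
  have "h ` S = S"
    using subspace_dim_equal[OF linear_subspace_image[OF lin sS] sS into] dim_image_eq[OF lin inj]
    by simp
  moreover have "mat 1 \<in> S" using S unfolding unital_subalgebra_def by auto
  ultimately obtain c where "c \<in> S" "a ** c = mat 1" unfolding h_def by force
  then show ?thesis using matrix_left_right_inverse by blast
qed

definition quad_form :: "complex^'n^'n \<Rightarrow> complex^'n \<Rightarrow> complex" where
  "quad_form A x = (\<Sum>i\<in>UNIV. cnj (x $ i) * (A *v x) $ i)"

lemma psd_mat_iff:
  "psd_mat A \<longleftrightarrow> adjoint_mat A = A \<and> (\<forall>x. Im (quad_form A x) = 0 \<and> Re (quad_form A x) \<ge> 0)"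
  by (simp add: psd_mat_def quad_form_def Let_def)

lemma quad_form_shift:
  fixes b :: "complex^'n^'n"
  shows "quad_form (b + scaleR r (mat 1)) x = quad_form b x + of_real (r * (\<Sum>i\<in>UNIV. norm (x $ i) ^ 2))"
proof -
  have "scaleR r (mat 1) *v x = scaleR r (mat 1 *v x)"
    by (simp add: vec_eq_iff matrix_vector_mult_def scaleR_conv_of_real[where 'a=complex]
        sum_distrib_left mult.assoc)
  then have "(b + scaleR r (mat 1)) *v x = b *v x + scaleR r x"
    by (simp add: matrix_vector_mult_add_rdistrib)
  then have "quad_form (b + scaleR r (mat 1)) x
      = quad_form b x + (\<Sum>i\<in>UNIV. of_real r * (x $ i * cnj (x $ i)))"
    unfolding quad_form_def
    by (simp add: scaleR_conv_of_real[where 'a=complex] distrib_left sum.distrib algebra_simps)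
  also have "(\<Sum>i\<in>UNIV. of_real r * (x $ i * cnj (x $ i))) = of_real (r * (\<Sum>i\<in>UNIV. norm (x $ i) ^ 2))"
    unfolding of_real_mult of_real_sum complex_norm_square sum_distrib_left ..
  finally show ?thesis .
qed

text \<open>For b \<ge> 0 and r > 0, b + r I is positive and invertible, since its quadratic form
  is at least r times the squared norm.\<close>
lemma psd_shift_pos_invertible:
  assumes b: "psd_mat b" and r: "r > 0"
  shows "b + scaleR r (mat 1) \<in> pos_invertible_mats"
proof -
  let ?E = "b + scaleR r (mat 1)"
  have hb: "adjoint_mat b = b" and qb: "\<And>x. Im (quad_form b x) = 0 \<and> Re (quad_form b x) \<ge> 0"
    using b by (auto simp: psd_mat_iff)
  have "adjoint_mat ?E = ?E"
    unfolding vec_eq_iff using hermitian_entry[OF hb]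
    by (auto simp: adjoint_mat_def mat_def scaleR_mat_entrywise)
  moreover have "Im (quad_form ?E x) = 0 \<and> Re (quad_form ?E x) \<ge> 0" for x
    using qb[of x] r by (simp add: quad_form_shift sum_nonneg)
  moreover have "invertible ?E"
    unfolding invertible_left_inverse matrix_left_invertible_ker
  proof (intro allI impI)
    fix x assume "?E *v x = 0"
    then have "quad_form ?E x = 0" by (simp add: quad_form_def)
    then have "Re (quad_form b x) + r * (\<Sum>i\<in>UNIV. norm (x $ i) ^ 2) = 0"
      unfolding quad_form_shift
      by (metis Re_complex_of_real plus_complex.sel(1) zero_complex.sel(1))
    then have "(\<Sum>i\<in>UNIV. norm (x $ i) ^ 2) = 0"
      using qb[of x] r by (smt (verit) mult_pos_pos sum_nonneg zero_le_power2)
    then show "x = 0" by (simp add: vec_eq_iff sum_nonneg_eq_0_iff)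
  qed
  ultimately show ?thesis by (auto simp: pos_invertible_mats_def psd_mat_iff)
qed

lemma psd_in_closure_pos_invertible:
  assumes "psd_mat b"
  shows "b \<in> closure pos_invertible_mats"
proof -
  define E where "E = (\<lambda>k::nat. b + scaleR (inverse (real (Suc k))) (mat 1))"
  have "E k \<in> pos_invertible_mats" for k
    unfolding E_def by (rule psd_shift_pos_invertible[OF assms]) simp
  moreover have "E \<longlonglongrightarrow> b + scaleR 0 (mat 1)"
    unfolding E_def by (intro tendsto_intros LIMSEQ_inverse_real_of_nat)
  ultimately show ?thesis unfolding closure_sequential by auto
qed

lemma pos_invertible_inverse:
  assumes p: "p \<in> pos_invertible_mats" and Bp: "B ** p = mat 1" and pB: "p ** B = mat 1"
  shows "B \<in> pos_invertible_mats"
proof -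
  have hp: "adjoint_mat p = p" and qp: "\<And>x. Im (quad_form p x) = 0 \<and> Re (quad_form p x) \<ge> 0"
    using p by (auto simp: psd_mat_iff pos_invertible_mats_def)
  have "adjoint_mat B ** p = mat 1"
    by (metis adjoint_mult adjoint_id pB hp)
  then have "adjoint_mat B = B"
    by (metis pB matrix_mul_assoc matrix_mul_lid matrix_mul_rid)
  moreover have "Im (quad_form B x) = 0 \<and> Re (quad_form B x) \<ge> 0" for x
  proof -
    have x: "x = p *v (B *v x)" unfolding matrix_vector_mul_assoc pB by simp
    have "quad_form B x = (\<Sum>i\<in>UNIV. cnj ((p *v (B *v x)) $ i) * (B *v x) $ i)"
      unfolding quad_form_def using x by simp
    also have "\<dots> = cnj (quad_form p (B *v x))" by (simp add: quad_form_def mult.commute)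
    finally show ?thesis using qp[of "B *v x"] by simp
  qed
  moreover have "invertible B" unfolding invertible_def using Bp pB by blast
  ultimately show ?thesis by (auto simp: pos_invertible_mats_def psd_mat_iff)
qed

lemma logmodular_pos_invertible_adjoint_square:
  fixes S :: "(complex^'n^'n) set"
  assumes "logmodular S"
  shows "pos_invertible_mats \<subseteq> (\<lambda>a. adjoint_mat a ** a) ` S"
proof -
  have "{adjoint_mat a ** a | a. a \<in> invertibles_in S} \<subseteq> (\<lambda>a. adjoint_mat a ** a) ` S"
    unfolding invertibles_in_def by auto
  then show ?thesis
    using assms closure_minimal closed_image_adjoint_square unfolding logmodular_def by blast
qed

text \<open>Passing to inverses: p^-1 = a* a with a invertible in S by c, so p = c c*.\<close>
lemma logmodular_pos_invertible_adjoint_cosquare: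
  fixes S :: "(complex^'n^'n) set"
  assumes S: "logmodular S"
  shows "pos_invertible_mats \<subseteq> (\<lambda>c. c ** adjoint_mat c) ` S"
proof
  fix p :: "complex^'n^'n" assume p: "p \<in> pos_invertible_mats"
  then obtain B :: "complex^'n^'n" where Bp: "B ** p = mat 1" and pB: "p ** B = mat 1"
    unfolding pos_invertible_mats_def invertible_def by blast
  obtain a :: "complex^'n^'n" where a: "a \<in> S" "B = adjoint_mat a ** a"
    using pos_invertible_inverse[OF p Bp pB] logmodular_pos_invertible_adjoint_square[OF S] by blast
  have "(p ** adjoint_mat a) ** a = mat 1" using pB a(2) by (simp add: matrix_mul_assoc)
  then obtain c where c: "c \<in> S" "a ** c = mat 1" "c ** a = mat 1"
    using unital_subalgebra_inverse a(1) S unfolding logmodular_def by blast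
  have "B ** (c ** adjoint_mat c) = adjoint_mat a ** (a ** c) ** adjoint_mat c"
    using a(2) by (simp add: matrix_mul_assoc)
  also have "\<dots> = adjoint_mat (c ** a)" using c(2) by (simp add: adjoint_mult)
  finally have "B ** (c ** adjoint_mat c) = mat 1" using c(3) by simp
  then have "c ** adjoint_mat c = p"
    by (metis Bp matrix_left_right_inverse matrix_mul_assoc matrix_mul_lid)
  then show "p \<in> (\<lambda>c. c ** adjoint_mat c) ` S" using c(1) by blast
qed

theorem mainTheorem1:
  fixes S :: "(complex^'n^'n) set" and b :: "complex^'n^'n"
  assumes "logmodular S"
    and "psd_mat b"
  shows "\<exists>a\<in>S. \<exists>c\<in>S. b = adjoint_mat a ** a \<and> b = c ** adjoint_mat c"
proof -
  have alg: "unital_subalgebra S" using assms(1) unfolding logmodular_def by simp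
  have b: "b \<in> closure pos_invertible_mats"
    using assms(2) by (rule psd_in_closure_pos_invertible)
  have "b \<in> (\<lambda>a. adjoint_mat a ** a) ` S"
    using closure_minimal[OF logmodular_pos_invertible_adjoint_square[OF assms(1)]
        closed_image_adjoint_square[OF alg]] b by blast
  moreover have "b \<in> (\<lambda>c. c ** adjoint_mat c) ` S"
    using closure_minimal[OF logmodular_pos_invertible_adjoint_cosquare[OF assms(1)]
        closed_image_adjoint_cosquare[OF alg]] b by blast
  ultimately show ?thesis by blast
qed

end
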